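(* Let $n\geq2$, $A\in\mathrm{SL}_n(\mathbb Z)$, $B\in M_n(\mathbb R)$ with $\exp(B)=A$, $d$ the dimension of the generalized eigenspace of $B$ for eigenvalue $0$ and $d'=\dim\ker B$, and let $M=\Gamma\backslash G(B)$ as in the context. There exists a sequence of admissible homogeneous metrics $g_\varepsilon$ on $M$ with uniformly bounded sectional curvature such that $\lambda^{inv}_{1,1}(M,g_\varepsilon)\to 0$ as $\varepsilon\to0$ if and only if $d\neq d'$ (i.e. the Jordan form of $B$ has a nonzero nilpotent block).
   Context: $G=G(B)$ is the image of $(x_1,\dots,x_n,y)\in\mathbb R^{n+1}\mapsto\begin{pmatrix}\exp(yB)&0&x\\0&1&y\\0&0&1\end{pmatrix}\in\mathrm{GL}_{n+2}(\mathbb R)$ (blocks of sizes $n,1,1$, $x=(x_1,\dots,x_n)^T$), and $\Gamma$ is the image of $\mathbb Z^{n+1}$; $M=\Gamma\backslash G$ is the suspension of the torus diffeomorphism $A$, fibred over $S^1$ by $y$. Let $X_i,Y$ be the left-invariant fields generated at the identity by $\partial/\partial x_i,\partial/\partial y$. A homogeneous metric on $M$ is induced by a left-invariant metric on $G$; admissible means there are a basis $V_1,\dots,V_n$ of $\mathrm{span}(X_i)$ and $Y'$ with $Y'-Y\in\mathrm{span}(X_i)$ such that $(V_1,\dots,V_n,Y')$ is orthonormal (so the projection to the circle of length 1 is a Riemannian submersion). $\Delta^1_{inv}$ is the Hodge Laplacian restricted to $1$-forms induced by left-invariant forms on $G$, and $\lambda^{inv}_{1,1}$ its first nonzero eigenvalue.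 *)

theory Defs
  imports "HOL-Analysis.Analysis"
begin

fun matpow :: "real^'n^'n \<Rightarrow> nat \<Rightarrow> real^'n^'n" where
  "matpow B 0 = mat 1"
| "matpow B (Suc k) = B ** matpow B k"

definition mat_exp :: "real^'n^'n \<Rightarrow> real^'n^'n" where
  "mat_exp B = (\<chi> i j. (\<Sum>k. (matpow B k $ i $ j) / fact k))"

definition gen_kernel_dim :: "real^'n^'n \<Rightarrow> nat" where
  "gen_kernel_dim B = dim {v. \<exists>k. matpow B k *v v = 0}"

definition kernel_dim :: "real^'n^'n \<Rightarrow> nat" where
  "kernel_dim B = dim {v. B *v v = 0}"

text \<open>The Lie algebra g of G(B) is identified with real^('n option):
  coordinate Some i is the X_i-component, coordinate None the Y-component.
  Brackets of the left-invariant fields: [X_i,X_j] = 0, [Y,X_i] = sum_j B_ji X_j.\<close>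

definition xpart :: "real^('n option) \<Rightarrow> real^'n" where
  "xpart u = (\<chi> i. u $ Some i)"

definition lie_bracket :: "real^'n^'n \<Rightarrow> real^('n option) \<Rightarrow> real^('n option) \<Rightarrow> real^('n option)" where
  "lie_bracket B u v =
     (let w = (u $ None) *\<^sub>R (B *v xpart v) - (v $ None) *\<^sub>R (B *v xpart u)
      in (\<chi> a. case a of None \<Rightarrow> 0 | Some i \<Rightarrow> w $ i))"

text \<open>A left-invariant metric is determined by an orthonormal basis F of g
  (column a of the invertible matrix F is the a-th frame vector). Everything below is
  expressed in the coordinates w.r.t. this orthonormal frame, so the inner product is the
  dot product.\<close>

definition admissible_frame :: "real^('n::finite option)^('n option) \<Rightarrow> bool" where
  "admissible_frame F \<longleftrightarrow> invertible F \<and> (\<forall>i. F $ None $ Some i = 0) \<and> F $ None $ None = 1"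

definition frame_bracket ::
  "real^'n^'n \<Rightarrow> real^('n::finite option)^('n option) \<Rightarrow> real^('n option) \<Rightarrow> real^('n option) \<Rightarrow> real^('n option)" where
  "frame_bracket B F u v = matrix_inv F *v lie_bracket B (F *v u) (F *v v)"

text \<open>Levi-Civita connection on left-invariant fields (Koszul formula).\<close>
definition lc_nabla ::
  "real^'n^'n \<Rightarrow> real^('n::finite option)^('n option) \<Rightarrow> real^('n option) \<Rightarrow> real^('n option) \<Rightarrow> real^('n option)" where
  "lc_nabla B F u v = (\<chi> c. (1/2) * (frame_bracket B F u v \<bullet> axis c 1
        - frame_bracket B F v (axis c 1) \<bullet> u + frame_bracket B F (axis c 1) u \<bullet> v))"

definition curv ::
  "real^'n^'n \<Rightarrow> real^('n::finite option)^('n option) \<Rightarrow> real^('n option) \<Rightarrow> real^('n option) \<Rightarrow> real^('n option) \<Rightarrow> real^('n option)" where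
  "curv B F u v w = lc_nabla B F u (lc_nabla B F v w) - lc_nabla B F v (lc_nabla B F u w)
                    - lc_nabla B F (frame_bracket B F u v) w"

definition sec_curv ::
  "real^'n^'n \<Rightarrow> real^('n::finite option)^('n option) \<Rightarrow> real^('n option) \<Rightarrow> real^('n option) \<Rightarrow> real" where
  "sec_curv B F u v = (curv B F u v v \<bullet> u) / ((u \<bullet> u) * (v \<bullet> v) - (u \<bullet> v)^2)"

text \<open>Invariant 1-forms: alpha(e_a) = alpha $ a in the orthonormal frame;
  d alpha (x,y) = - alpha([x,y]). Inner product on 2-forms:
  <w,h> = sum_{a<b} w(e_a,e_b) h(e_a,e_b) = 1/2 sum_{a,b} ...\<close>
definition d_form ::
  "real^'n^'n \<Rightarrow> real^('n::finite option)^('n option) \<Rightarrow> real^('n option) \<Rightarrow> 'n option \<Rightarrow> 'n option \<Rightarrow> real" where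
  "d_form B F \<alpha> a b = - (\<alpha> \<bullet> frame_bracket B F (axis a 1) (axis b 1))"

definition two_form_inner ::
  "('n option \<Rightarrow> 'n option \<Rightarrow> real) \<Rightarrow> ('n option \<Rightarrow> 'n option \<Rightarrow> real) \<Rightarrow> real" where
  "two_form_inner \<omega> \<eta> = (1/2) * (\<Sum>a\<in>UNIV. \<Sum>b\<in>UNIV. \<omega> a b * \<eta> a b)"

text \<open>lambda is an eigenvalue of the Hodge Laplacian on invariant 1-forms,
  Delta = delta d (+ d delta, which vanishes on invariant 1-forms), delta being the
  (L^2-)adjoint of d.\<close>
definition inv_laplace_eigenvalue ::
  "real^'n^'n \<Rightarrow> real^('n::finite option)^('n option) \<Rightarrow> real \<Rightarrow> bool" where
  "inv_laplace_eigenvalue B F lam \<longleftrightarrow>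
     (\<exists>\<alpha>. \<alpha> \<noteq> 0 \<and> (\<forall>\<beta>. two_form_inner (d_form B F \<alpha>) (d_form B F \<beta>) = lam * (\<alpha> \<bullet> \<beta>)))"

definition lambda_inv_11 :: "real^'n^'n \<Rightarrow> real^('n::finite option)^('n option) \<Rightarrow> real" where
  "lambda_inv_11 B F = Inf {lam. lam > 0 \<and> inv_laplace_eigenvalue B F lam}"

end

theory Submission
  imports Defs
begin

(* Let P be the x-block of an admissible frame. In that frame the metric Lie algebra of G(B)
   is the one of G(C), C = P^-1 B P, with X_1, ..., X_n, Y orthonormal. Its sectional curvatures
   are O(|C|^2), and the curvatures K(Y, X_j) add up to -(|C|^2 + tr C^2)/2, where |C| is the
   Frobenius norm; since tr C^2 = tr B^2, bounded curvature means bounded |C|. A positive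
   eigenvalue of the invariant Laplacian on 1-forms is an eigenvalue of C C^T.
   If ker B^2 = ker B (i.e. d = d'), some polynomial Y in B satisfies B Y B = B; then
   C (P^-1 Y P) C = C with P^-1 Y P bounded in terms of |C|, which bounds every such eigenvalue
   from below. Otherwise B has a nilpotent block: in a basis with C e_i = 0, C e_j = e_i and
   e_i^T C = e_j^T, scaling e_i by 1/e keeps |C| bounded and produces the eigenvalue e^2. *)

declare transpose_matrix_vector [simp del]

definition xembed :: "real^'n \<Rightarrow> real^('n option)" where
  "xembed z = (\<chi> a. case a of None \<Rightarrow> 0 | Some i \<Rightarrow> z $ i)"

lemma xembed_nth [simp]: "xembed z $ None = 0" "xembed z $ Some i = z $ i"
  by (simp_all add: xembed_def)

lemma xpart_nth [simp]: "xpart u $ i = u $ Some i"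
  by (simp add: xpart_def)

lemma xpart_xembed [simp]: "xpart (xembed z) = z"
  by (simp add: vec_eq_iff)

lemma xpart_simps [simp]:
  "xpart (u + v) = xpart u + xpart v" "xpart (u - v) = xpart u - xpart v"
  "xpart (c *\<^sub>R u) = c *\<^sub>R xpart u" "xpart 0 = 0"
  "xpart (axis None 1) = 0" "xpart (axis (Some i) 1) = axis i 1"
  by (simp_all add: vec_eq_iff axis_def)

lemma xembed_simps [simp]:
  "xembed (z + z') = xembed z + xembed z'" "xembed (z - z') = xembed z - xembed z'"
  "xembed (c *\<^sub>R z) = c *\<^sub>R xembed z" "xembed (- z) = - xembed z" "xembed 0 = 0"
  by (simp_all add: vec_eq_iff xembed_def split: option.split)

lemma axis_option_nth [simp]:
  "axis None 1 $ None = 1" "axis (Some i) 1 $ None = 0" "axis None 1 $ Some i = 0"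
  by (simp_all add: axis_def)

lemma inner_axis_one [simp]:
  fixes u :: "real^'m"
  shows "u \<bullet> axis c 1 = u $ c" "axis c 1 \<bullet> u = u $ c"
  by (simp_all add: inner_axis inner_axis')

lemma sum_UNIV_option:
  "(\<Sum>a\<in>(UNIV :: 'n::finite option set). f a) = f None + (\<Sum>i\<in>UNIV. f (Some i))"
  by (simp add: UNIV_option_conv sum.reindex)

lemma inner_option: "u \<bullet> v = u $ None * v $ None + xpart u \<bullet> xpart v"
  for u v :: "real^('n::finite option)"
  by (simp add: inner_vec_def sum_UNIV_option)

lemma inner_xembed [simp]: "xembed z \<bullet> v = z \<bullet> xpart v" "v \<bullet> xembed z = xpart v \<bullet> z"
  by (simp_all add: inner_option)

lemma norm_xembed [simp]: "norm (xembed z) = norm z"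
  by (simp add: norm_eq_sqrt_inner)

lemma norm_xpart_le: "norm (xpart u) \<le> norm u"
  unfolding norm_eq_sqrt_inner inner_option[of u u] by (simp add: real_sqrt_le_mono)

lemma matrix_vector_axis_nth [simp]: "(C *v axis j 1) $ i = C $ i $ j"
  for C :: "real^'n^'m"
  by (simp add: matrix_vector_mult_def axis_def if_distrib cong: if_cong)

lemma inner_transpose_matrix_vector: "(transpose C *v x) \<bullet> y = x \<bullet> (C *v y)"
  for C :: "real^'n^'m"
  by (simp add: transpose_matrix_vector dot_lmul_matrix)

(* The Euclidean norm of real^'n^'m is the Frobenius norm. *)
lemma norm_matrix_vector_le: "norm (C *v y) \<le> norm C * norm y"
  for C :: "real^'n^'m"
proof -
  have "norm (C *v y)^2 = (\<Sum>i\<in>UNIV. (C $ i \<bullet> y)^2)"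
    unfolding power2_norm_eq_inner inner_vec_def[of "C *v y"] matrix_vector_mul_component
    by (simp add: power2_eq_square)
  also have "\<dots> \<le> (\<Sum>i\<in>UNIV. (C $ i \<bullet> C $ i) * (y \<bullet> y))"
    by (intro sum_mono Cauchy_Schwarz_ineq)
  also have "\<dots> = (norm C * norm y)^2"
    by (simp add: power_mult_distrib power2_norm_eq_inner inner_vec_def sum_distrib_right)
  finally show ?thesis by (simp add: power2_le_iff_abs_le)
qed

lemma norm_transpose [simp]: "norm (transpose C) = norm C"
  for C :: "real^'n^'m"
  unfolding norm_eq_sqrt_inner inner_vec_def transpose_def by simp (subst sum.swap, rule refl)

lemma abs_inner_matrix_vector_le: "\<bar>x \<bullet> (C *v y)\<bar> \<le> norm C * norm x * norm y"
  for C :: "real^'n::finite^'m::finite"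
proof -
  have "\<bar>x \<bullet> (C *v y)\<bar> \<le> norm x * norm (C *v y)" by (rule Cauchy_Schwarz_ineq2)
  also have "\<dots> \<le> norm x * (norm C * norm y)"
    by (simp add: mult_left_mono norm_matrix_vector_le)
  finally show ?thesis by (simp add: mult_ac)
qed

lemma matrix_inv_left: "invertible A \<Longrightarrow> matrix_inv A ** A = mat 1"
  unfolding invertible_def matrix_inv_def by (rule someI2_ex) auto

section \<open>Admissible frames\<close>

lemma lie_bracket_eq:
  "lie_bracket B u v = xembed ((u $ None) *\<^sub>R (B *v xpart v) - (v $ None) *\<^sub>R (B *v xpart u))"
  by (simp add: lie_bracket_def xembed_def)

lemma frame_bracket_mat_1 [simp]: "frame_bracket C (mat 1) = lie_bracket C"
  for C :: "real^'n::finite^'n"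
proof -
  have "invertible (mat 1 :: real^('n option)^('n option))"
    by (metis invertible_def matrix_mul_lid)
  then have "matrix_inv (mat 1 :: real^('n option)^('n option)) = mat 1"
    using matrix_inv_left matrix_mul_rid by metis
  then show ?thesis by (simp add: fun_eq_iff frame_bracket_def)
qed

definition frame_xblock :: "real^('n::finite option)^('n option) \<Rightarrow> real^'n^'n" where
  "frame_xblock F = (\<chi> i j. F $ Some i $ Some j)"

definition block_frame :: "real^'n::finite^'n \<Rightarrow> real^('n option)^('n option)" where
  "block_frame P = (\<chi> a b. case (a, b) of
      (None, None) \<Rightarrow> 1 | (Some i, Some j) \<Rightarrow> P $ i $ j | _ \<Rightarrow> 0)"

lemma matrix_vector_mult_option:
  "(F *v u) $ a = F $ a $ None * u $ None + (\<Sum>j\<in>UNIV. F $ a $ Some j * u $ Some j)"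
  for F :: "real^('n::finite option)^'m"
  by (simp add: matrix_vector_mult_def sum_UNIV_option)

lemma invertible_frame_xblock:
  assumes "admissible_frame F"
  shows "invertible (frame_xblock F)"
proof -
  have F: "invertible F" "\<And>j. F $ None $ Some j = 0"
    using assms by (simp_all add: admissible_frame_def)
  define G where "G = matrix_inv F"
  have "((\<chi> i j. G $ Some i $ Some j) ** frame_xblock F) $ i $ j = mat 1 $ i $ j" for i j
  proof -
    have "(G ** F) $ Some i $ Some j = mat 1 $ Some i $ Some j"
      using matrix_inv_left[OF F(1)] by (simp add: G_def)
    then show ?thesis
      by (simp add: matrix_matrix_mult_def sum_UNIV_option F(2) frame_xblock_def mat_def)
  qed
  then show ?thesis
    using invertible_left_inverse by (metis vec_eq_iff)
qed

lemma block_frame_mult: "block_frame P ** block_frame Q = block_frame (P ** Q)"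
proof -
  have "(block_frame P ** block_frame Q) $ a $ b = block_frame (P ** Q) $ a $ b" for a b
    by (cases a; cases b) (simp_all add: block_frame_def matrix_matrix_mult_def sum_UNIV_option)
  then show ?thesis by (simp add: vec_eq_iff)
qed

lemma block_frame_mat_1: "block_frame (mat 1 :: real^'n::finite^'n) = mat 1"
proof -
  have "block_frame (mat 1) $ a $ b = (mat 1 :: real^('n option)^('n option)) $ a $ b" for a b
    by (cases a; cases b) (simp_all add: block_frame_def mat_def)
  then show ?thesis by (simp add: vec_eq_iff)
qed

lemma frame_xblock_block_frame [simp]: "frame_xblock (block_frame P) = P"
  by (simp add: frame_xblock_def block_frame_def vec_eq_iff)

lemma admissible_block_frame:
  assumes "Q ** P = mat 1"
  shows "admissible_frame (block_frame P)"
proof -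
  have "block_frame Q ** block_frame P = mat 1"
    by (simp add: block_frame_mult block_frame_mat_1 assms)
  then have "invertible (block_frame P)"
    using invertible_left_inverse by blast
  then show ?thesis by (simp add: admissible_frame_def block_frame_def)
qed

(* The Y-components of the frame vectors drop out of every bracket. *)
lemma frame_bracket_admissible:
  assumes adm: "admissible_frame F" and Q: "Q ** frame_xblock F = mat 1"
  shows "frame_bracket B F = frame_bracket (Q ** B ** frame_xblock F) (mat 1)"
proof -
  define P where "P = frame_xblock F"
  have F: "matrix_inv F ** F = mat 1" "\<And>j. F $ None $ Some j = 0" "F $ None $ None = 1"
    using adm matrix_inv_left by (auto simp: admissible_frame_def)
  have PQ: "P ** Q = mat 1"
    using Q matrix_left_right_inverse unfolding P_def by blast
  have F_xembed: "F *v xembed y = xembed (P *v y)" for y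
  proof -
    have "(F *v xembed y) $ a = xembed (P *v y) $ a" for a
      unfolding matrix_vector_mult_option
      by (cases a) (simp_all add: F(2) P_def frame_xblock_def matrix_vector_mult_def)
    then show ?thesis by (simp add: vec_eq_iff)
  qed
  have xpart_F: "xpart (F *v u) = P *v xpart u + (u $ None) *\<^sub>R (\<chi> i. F $ Some i $ None)" for u
    by (simp add: vec_eq_iff P_def frame_xblock_def matrix_vector_mult_def sum_UNIV_option)
  have None_F: "(F *v u) $ None = u $ None" for u
    by (simp add: matrix_vector_mult_option F(2,3))
  have "frame_bracket B F u v = lie_bracket (Q ** B ** P) u v" for u v
  proof -
    define z where "z = (u $ None) *\<^sub>R xpart v - (v $ None) *\<^sub>R xpart u"
    have "lie_bracket B (F *v u) (F *v v) = xembed (B *v (P *v z))"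
      unfolding lie_bracket_eq xpart_F None_F z_def by (simp add: algebra_simps)
    also have "\<dots> = F *v xembed ((Q ** B ** P) *v z)"
      by (simp add: F_xembed flip: matrix_vector_mul_assoc)
         (metis PQ matrix_vector_mul_assoc matrix_vector_mul_lid)
    finally have "frame_bracket B F u v = xembed ((Q ** B ** P) *v z)"
      by (simp add: frame_bracket_def matrix_vector_mul_assoc F(1))
    then show ?thesis
      by (simp add: lie_bracket_eq z_def algebra_simps)
  qed
  then show ?thesis by (simp add: fun_eq_iff P_def)
qed

lemma frame_bracket_block_frame:
  assumes "Q ** P = mat 1"
  shows "frame_bracket B (block_frame P) = frame_bracket (Q ** B ** P) (mat 1)"
  using frame_bracket_admissible[OF admissible_block_frame[OF assms], of Q B] assms by simp

lemma sec_curv_cong: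
  "frame_bracket B F = frame_bracket B' F' \<Longrightarrow> sec_curv B F = sec_curv B' F'"
  by (simp add: fun_eq_iff sec_curv_def curv_def lc_nabla_def)

lemma inv_laplace_eigenvalue_cong:
  assumes "frame_bracket B F = frame_bracket B' F'"
  shows "inv_laplace_eigenvalue B F lam = inv_laplace_eigenvalue B' F' lam"
proof -
  have "d_form B F = d_form B' F'"
    using assms by (simp add: fun_eq_iff d_form_def)
  then show ?thesis by (simp add: inv_laplace_eigenvalue_def)
qed

section \<open>Curvature of the standard metric on G(C)\<close>

lemma inner_matrix_vector_axis:
  fixes C :: "real^'n::finite^'m::finite"
  shows "x \<bullet> (C *v axis i 1) = (transpose C *v x) $ i"
    and "(C *v axis i 1) \<bullet> x = (transpose C *v x) $ i"
  by (simp_all add: inner_vec_def matrix_vector_mult_def transpose_def axis_def mult.commute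
      if_distrib cong: if_cong)

lemma lie_bracket_axis [simp]:
  "lie_bracket C (axis None 1) (axis None 1) = 0"
  "lie_bracket C (axis None 1) (axis (Some j) 1) = xembed (C *v axis j 1)"
  "lie_bracket C (axis (Some i) 1) (axis None 1) = - xembed (C *v axis i 1)"
  "lie_bracket C (axis (Some i) 1) (axis (Some j) 1) = 0"
  by (simp_all add: lie_bracket_eq matrix_vector_mult_scaleR)

lemma lc_nabla_mat_1:
  fixes C :: "real^'n::finite^'n"
  shows "lc_nabla C (mat 1) u v =
     xembed ((u $ None / 2) *\<^sub>R (C *v xpart v - transpose C *v xpart v)
           - (v $ None / 2) *\<^sub>R (C *v xpart u + transpose C *v xpart u))
     + ((xpart u \<bullet> (C *v xpart v) + xpart v \<bullet> (C *v xpart u)) / 2) *\<^sub>R axis None 1"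
proof -
  have "lc_nabla C (mat 1) u v $ a =
     (xembed ((u $ None / 2) *\<^sub>R (C *v xpart v - transpose C *v xpart v)
           - (v $ None / 2) *\<^sub>R (C *v xpart u + transpose C *v xpart u))
     + ((xpart u \<bullet> (C *v xpart v) + xpart v \<bullet> (C *v xpart u)) / 2) *\<^sub>R axis None 1) $ a" for a
  proof (cases a)
    case None
    then show ?thesis
      by (simp add: lc_nabla_def lie_bracket_eq algebra_simps inner_commute)
  next
    case (Some i)
    then show ?thesis
      by (simp add: lc_nabla_def lie_bracket_eq inner_matrix_vector_axis algebra_simps)
  qed
  then show ?thesis by (simp add: vec_eq_iff)
qed

lemma lc_nabla_mat_1_diff:
  fixes C :: "real^'n::finite^'n"
  shows "lc_nabla C (mat 1) (u - u') v = lc_nabla C (mat 1) u v - lc_nabla C (mat 1) u' v"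
    and "lc_nabla C (mat 1) u (v - v') = lc_nabla C (mat 1) u v - lc_nabla C (mat 1) u v'"
  by (simp_all add: lc_nabla_mat_1 algebra_simps inner_diff_left inner_diff_right diff_divide_distrib)

lemma lc_nabla_mat_1_scaleR:
  fixes C :: "real^'n::finite^'n"
  shows "lc_nabla C (mat 1) (c *\<^sub>R u) v = c *\<^sub>R lc_nabla C (mat 1) u v"
    and "lc_nabla C (mat 1) u (c *\<^sub>R v) = c *\<^sub>R lc_nabla C (mat 1) u v"
  by (simp_all add: lc_nabla_mat_1 algebra_simps)

lemma lc_nabla_mat_1_skew:
  fixes C :: "real^'n::finite^'n"
  shows "lc_nabla C (mat 1) u v \<bullet> w = - (lc_nabla C (mat 1) u w \<bullet> v)"
  by (simp add: lc_nabla_mat_1 inner_add_left inner_diff_left inner_option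
      inner_transpose_matrix_vector inner_commute[of _ "C *v _"] algebra_simps
      add_divide_distrib diff_divide_distrib)

lemma lie_bracket_shift: "lie_bracket C u (v - t *\<^sub>R u) = lie_bracket C u v"
  by (simp add: lie_bracket_eq algebra_simps)

lemma curv_mat_1_shift:
  fixes C :: "real^'n::finite^'n"
  shows "curv C (mat 1) u (v - t *\<^sub>R u) w = curv C (mat 1) u v w"
  by (simp add: curv_def lie_bracket_shift lc_nabla_mat_1_diff lc_nabla_mat_1_scaleR algebra_simps)

lemma curv_mat_1_inner_self:
  fixes C :: "real^'n::finite^'n"
  shows "curv C (mat 1) u v w \<bullet> w = 0"
  using lc_nabla_mat_1_skew[of C u "lc_nabla C (mat 1) v w" w]
    lc_nabla_mat_1_skew[of C v "lc_nabla C (mat 1) u w" w]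
    lc_nabla_mat_1_skew[of C "lie_bracket C u v" w w]
    inner_commute[of "lc_nabla C (mat 1) v w" "lc_nabla C (mat 1) u w"]
  by (simp add: curv_def inner_diff_left)

lemma curv_mat_1_shift_inner:
  fixes C :: "real^'n::finite^'n"
  shows "curv C (mat 1) u (v - t *\<^sub>R u) (v - t *\<^sub>R u) \<bullet> u = curv C (mat 1) u v v \<bullet> u"
proof -
  have "curv C (mat 1) u v (v - t *\<^sub>R u) = curv C (mat 1) u v v - t *\<^sub>R curv C (mat 1) u v u"
    by (simp add: curv_def lc_nabla_mat_1_diff lc_nabla_mat_1_scaleR algebra_simps)
  then show ?thesis
    using curv_mat_1_inner_self[of C u v u] by (simp add: curv_mat_1_shift inner_diff_left)
qed

lemma norm_lie_bracket_le: "norm (lie_bracket C u v) \<le> 2 * norm C * norm u * norm v"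
  for C :: "real^'n::finite^'n"
proof -
  have "norm (lie_bracket C u v) \<le> \<bar>u $ None\<bar> * norm (C *v xpart v) + \<bar>v $ None\<bar> * norm (C *v xpart u)"
    unfolding lie_bracket_eq norm_xembed by (metis norm_scaleR norm_triangle_ineq4)
  also have "\<dots> \<le> norm u * (norm C * norm v) + norm v * (norm C * norm u)"
    by (intro add_mono mult_mono component_le_norm_cart order_trans[OF norm_matrix_vector_le]
        mult_left_mono norm_xpart_le) auto
  finally show ?thesis by (simp add: algebra_simps)
qed

lemma norm_scaled_sym_le:
  fixes C :: "real^'n::finite^'n"
  assumes "\<bar>s\<bar> \<le> a" and "norm x \<le> b"
  shows "norm ((s / 2) *\<^sub>R (C *v x + transpose C *v x)) \<le> norm C * a * b"
    and "norm ((s / 2) *\<^sub>R (C *v x - transpose C *v x)) \<le> norm C * a * b"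
proof -
  have scaled: "norm ((s / 2) *\<^sub>R w) \<le> norm C * a * b" if "norm w \<le> 2 * (norm C * b)" for w
  proof -
    have "norm ((s / 2) *\<^sub>R w) \<le> a / 2 * (2 * (norm C * b))"
      unfolding norm_scaleR using assms(1) that by (intro mult_mono) auto
    then show ?thesis by (simp add: mult_ac)
  qed
  have "norm (C *v x) \<le> norm C * b" and "norm (transpose C *v x) \<le> norm C * b"
    using norm_matrix_vector_le[of C x] norm_matrix_vector_le[of "transpose C" x] assms(2)
    by (metis mult_left_mono norm_ge_zero order_trans norm_transpose)+
  then show "norm ((s / 2) *\<^sub>R (C *v x + transpose C *v x)) \<le> norm C * a * b"
    and "norm ((s / 2) *\<^sub>R (C *v x - transpose C *v x)) \<le> norm C * a * b"
    using norm_triangle_ineq[of "C *v x" "transpose C *v x"]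
      norm_triangle_ineq4[of "C *v x" "transpose C *v x"] by (intro scaled; linarith)+
qed

lemma norm_lc_nabla_mat_1_le: "norm (lc_nabla C (mat 1) u v) \<le> 3 * norm C * norm u * norm v"
  for C :: "real^'n::finite^'n"
proof -
  define A where "A = (u $ None / 2) *\<^sub>R (C *v xpart v - transpose C *v xpart v)"
  define A' where "A' = (v $ None / 2) *\<^sub>R (C *v xpart u + transpose C *v xpart u)"
  define s where "s = (xpart u \<bullet> (C *v xpart v) + xpart v \<bullet> (C *v xpart u)) / 2"
  have "lc_nabla C (mat 1) u v = xembed (A - A') + s *\<^sub>R axis None 1"
    by (simp add: lc_nabla_mat_1 A_def A'_def s_def)
  then have "norm (lc_nabla C (mat 1) u v) \<le> norm A + norm A' + \<bar>s\<bar>"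
    using norm_triangle_ineq[of "xembed (A - A')" "s *\<^sub>R axis None 1"] norm_triangle_ineq4[of A A']
    by (simp del: xembed_simps)
  moreover have "norm A \<le> norm C * norm u * norm v" and "norm A' \<le> norm C * norm v * norm u"
    unfolding A_def A'_def
    by (intro norm_scaled_sym_le component_le_norm_cart norm_xpart_le)+
  moreover have xb: "\<bar>xpart a \<bullet> (C *v xpart b)\<bar> \<le> norm C * norm a * norm b" for a b
    using abs_inner_matrix_vector_le[of "xpart a" C "xpart b"] norm_xpart_le[of a] norm_xpart_le[of b]
    by (smt (verit) mult_left_mono mult_mono norm_ge_zero zero_le_mult_iff)
  have "\<bar>s\<bar> \<le> norm C * norm u * norm v"
    unfolding s_def
    using xb[of u v] xb[of v u] abs_triangle_ineq[of "xpart u \<bullet> (C *v xpart v)" "xpart v \<bullet> (C *v xpart u)"]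
    by (simp add: abs_divide mult_ac)
  ultimately show ?thesis
    by (simp add: algebra_simps)
qed

lemma norm_curv_mat_1_le:
  fixes C :: "real^'n::finite^'n"
  shows "norm (curv C (mat 1) u v w) \<le> 24 * (norm C)\<^sup>2 * norm u * norm v * norm w"
proof -
  let ?N = "lc_nabla C (mat 1)"
  have nested: "norm (?N a (?N b w)) \<le> 9 * (norm C)\<^sup>2 * norm a * norm b * norm w" for a b
  proof -
    have "norm (?N a (?N b w)) \<le> 3 * norm C * norm a * (3 * norm C * norm b * norm w)"
      by (rule order_trans[OF norm_lc_nabla_mat_1_le], intro mult_left_mono norm_lc_nabla_mat_1_le)
         simp
    then show ?thesis by (simp add: power2_eq_square mult_ac)
  qed
  have "norm (?N (lie_bracket C u v) w) \<le> 3 * norm C * (2 * norm C * norm u * norm v) * norm w"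
    by (rule order_trans[OF norm_lc_nabla_mat_1_le],
        intro mult_right_mono mult_left_mono norm_lie_bracket_le) simp_all
  then have bracket: "norm (?N (lie_bracket C u v) w) \<le> 6 * (norm C)\<^sup>2 * norm u * norm v * norm w"
    by (simp add: power2_eq_square mult_ac)
  have "norm (curv C (mat 1) u v w)
        \<le> norm (?N u (?N v w)) + norm (?N v (?N u w)) + norm (?N (lie_bracket C u v) w)"
    unfolding curv_def frame_bracket_mat_1
    using norm_triangle_ineq4[of "?N u (?N v w) - ?N v (?N u w)" "?N (lie_bracket C u v) w"]
      norm_triangle_ineq4[of "?N u (?N v w)" "?N v (?N u w)"]
    by linarith
  then show ?thesis
    using nested[of u v] nested[of v u] bracket by (simp add: mult_ac)
qed

lemma abs_sec_curv_mat_1_le: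
  fixes C :: "real^'n::finite^'n"
  assumes "(u \<bullet> u) * (v \<bullet> v) - (u \<bullet> v)\<^sup>2 \<noteq> 0"
  shows "\<bar>sec_curv C (mat 1) u v\<bar> \<le> 24 * (norm C)\<^sup>2"
proof -
  define D where "D = (u \<bullet> u) * (v \<bullet> v) - (u \<bullet> v)\<^sup>2"
  have "D > 0"
    using Cauchy_Schwarz_ineq[of u v] assms by (simp add: D_def)
  then have "u \<bullet> u \<noteq> 0"
    by (auto simp: D_def)
  \<comment> \<open>Replacing v by its component orthogonal to u changes neither numerator nor denominator.\<close>
  define v' where "v' = v - ((u \<bullet> v) / (u \<bullet> u)) *\<^sub>R u"
  have D: "D = (norm u)\<^sup>2 * (norm v')\<^sup>2"
    using \<open>u \<bullet> u \<noteq> 0\<close> unfolding v'_def D_def power2_norm_eq_inner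
    by (simp add: inner_diff_left inner_diff_right inner_commute field_simps power2_eq_square)
  have "\<bar>curv C (mat 1) u v v \<bullet> u\<bar> = \<bar>curv C (mat 1) u v' v' \<bullet> u\<bar>"
    by (simp add: v'_def curv_mat_1_shift_inner)
  also have "\<dots> \<le> norm (curv C (mat 1) u v' v') * norm u"
    by (rule Cauchy_Schwarz_ineq2)
  also have "\<dots> \<le> 24 * (norm C)\<^sup>2 * norm u * norm v' * norm v' * norm u"
    by (simp add: mult_right_mono norm_curv_mat_1_le)
  also have "\<dots> = 24 * (norm C)\<^sup>2 * D"
    by (simp add: D power2_eq_square mult_ac)
  finally have "\<bar>curv C (mat 1) u v v \<bullet> u\<bar> / D \<le> 24 * (norm C)\<^sup>2"
    using \<open>D > 0\<close> by (simp add: pos_divide_le_eq)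
  then show ?thesis
    using \<open>D > 0\<close> by (simp add: sec_curv_def D_def[symmetric] abs_divide)
qed

definition bounded_sec_curv ::
  "real^'n^'n \<Rightarrow> real^('n::finite option)^('n option) \<Rightarrow> real \<Rightarrow> bool" where
  "bounded_sec_curv B F K \<longleftrightarrow>
     (\<forall>u v. (u \<bullet> u) * (v \<bullet> v) - (u \<bullet> v)\<^sup>2 \<noteq> 0 \<longrightarrow> \<bar>sec_curv B F u v\<bar> \<le> K)"

lemma bounded_sec_curv_of_norm_le:
  assumes "frame_bracket B F = frame_bracket C (mat 1)" and "norm C \<le> L"
  shows "bounded_sec_curv B F (24 * L\<^sup>2)"
  unfolding bounded_sec_curv_def sec_curv_cong[OF assms(1)]
  using assms(2)
  by (meson abs_sec_curv_mat_1_le mult_left_mono norm_ge_zero order_trans power_mono zero_le_numeral)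

section \<open>Sectional curvatures of the planes spanned by Y and X_j\<close>

lemma sec_curv_mat_1_Y_X:
  fixes C :: "real^'n::finite^'n" and j :: 'n
  defines "a \<equiv> C *v axis j 1" and "b \<equiv> transpose C *v axis j 1"
  shows "sec_curv C (mat 1) (axis None 1) (axis (Some j) 1)
           = - (a \<bullet> a - b \<bullet> b) / 4 - (a \<bullet> a + a \<bullet> b) / 2"
proof -
  define Y :: "real^('n option)" where "Y = axis None 1"
  define X :: "real^('n option)" where "X = axis (Some j) 1"
  define k where "k = (1/2) *\<^sub>R (a - b)"
  let ?N = "lc_nabla C (mat 1)"
  have "?N Y (?N X X) = 0"
    by (simp add: lc_nabla_mat_1 X_def Y_def lc_nabla_mat_1_scaleR)
  moreover have "?N X (?N Y X) = ((b \<bullet> k + k \<bullet> a) / 2) *\<^sub>R Y"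
  proof -
    have "?N Y X = xembed k"
      by (simp add: lc_nabla_mat_1 X_def Y_def a_def b_def k_def algebra_simps)
    then show ?thesis
      by (simp add: lc_nabla_mat_1 X_def Y_def a_def b_def inner_transpose_matrix_vector)
  qed
  moreover have "?N (lie_bracket C Y X) X = ((a \<bullet> a + b \<bullet> a) / 2) *\<^sub>R Y"
    by (simp add: lc_nabla_mat_1 X_def Y_def a_def b_def inner_transpose_matrix_vector)
  ultimately have "curv C (mat 1) Y X X \<bullet> Y = - (b \<bullet> k + k \<bullet> a) / 2 - (a \<bullet> a + b \<bullet> a) / 2"
    by (simp add: curv_def Y_def inner_diff_left field_simps)
  also have "\<dots> = - (a \<bullet> a - b \<bullet> b) / 4 - (a \<bullet> a + a \<bullet> b) / 2"
    by (simp add: k_def inner_diff_left inner_diff_right inner_commute algebra_simps;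
        simp add: field_simps)
  finally show ?thesis
    by (simp add: sec_curv_def X_def Y_def)
qed

lemma sum_sec_curv_mat_1_Y_X:
  fixes C :: "real^'n::finite^'n"
  shows "(\<Sum>j\<in>UNIV. sec_curv C (mat 1) (axis None 1) (axis (Some j) 1))
           = - ((norm C)\<^sup>2 + trace (C ** C)) / 2"
proof -
  have norm_sq: "(norm C)\<^sup>2 = (\<Sum>i\<in>UNIV. \<Sum>j\<in>UNIV. C $ i $ j * C $ i $ j)"
    by (simp add: power2_norm_eq_inner inner_vec_def)
  have "(\<Sum>j\<in>UNIV. (C *v axis j 1) \<bullet> (C *v axis j 1)) = (\<Sum>j\<in>UNIV. \<Sum>i\<in>UNIV. C $ i $ j * C $ i $ j)"
    by (simp add: inner_vec_def)
  also have "\<dots> = (norm C)\<^sup>2"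
    unfolding norm_sq by (rule sum.swap)
  finally have columns: "(\<Sum>j\<in>UNIV. (C *v axis j 1) \<bullet> (C *v axis j 1)) = (norm C)\<^sup>2" .
  have rows: "(\<Sum>j\<in>UNIV. (transpose C *v axis j 1) \<bullet> (transpose C *v axis j 1)) = (norm C)\<^sup>2"
    unfolding norm_sq by (simp add: inner_vec_def transpose_def)
  have mixed: "(\<Sum>j\<in>UNIV. (C *v axis j 1) \<bullet> (transpose C *v axis j 1)) = trace (C ** C)"
    unfolding trace_def inner_vec_def matrix_matrix_mult_def
    by (simp add: transpose_def mult.commute)
  have "(\<Sum>j\<in>UNIV. sec_curv C (mat 1) (axis None 1) (axis (Some j) 1))
        = (\<Sum>j\<in>UNIV. (transpose C *v axis j 1) \<bullet> (transpose C *v axis j 1) / 4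
              - 3 / 4 * ((C *v axis j 1) \<bullet> (C *v axis j 1))
              - (C *v axis j 1) \<bullet> (transpose C *v axis j 1) / 2)"
    by (rule sum.cong) (simp_all add: sec_curv_mat_1_Y_X field_simps)
  also have "\<dots> = (norm C)\<^sup>2 / 4 - 3 / 4 * (norm C)\<^sup>2 - trace (C ** C) / 2"
    by (simp add: sum_subtractf columns rows mixed flip: sum_divide_distrib sum_distrib_left)
  finally show ?thesis
    by (simp add: field_simps)
qed

lemma norm_sq_le_of_sec_curv_bounded:
  fixes C :: "real^'n::finite^'n" and K :: real
  assumes "\<And>j. \<bar>sec_curv C (mat 1) (axis None 1) (axis (Some j) 1)\<bar> \<le> K"
  shows "(norm C)\<^sup>2 \<le> 2 * CARD('n) * K - trace (C ** C)"
proof -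
  have "(\<Sum>j\<in>(UNIV :: 'n set). - K) \<le> (\<Sum>j\<in>UNIV. sec_curv C (mat 1) (axis None 1) (axis (Some j) 1))"
    by (intro sum_mono) (metis assms abs_le_D2 minus_le_iff)
  then show ?thesis
    unfolding sum_sec_curv_mat_1_Y_X by simp
qed

lemma trace_square_conj:
  fixes B P Q :: "real^'n::finite^'n"
  assumes "Q ** P = mat 1"
  shows "trace ((Q ** B ** P) ** (Q ** B ** P)) = trace (B ** B)"
proof -
  have PQ: "P ** Q = mat 1"
    using assms matrix_left_right_inverse by blast
  have "(Q ** B ** P) ** (Q ** B ** P) = Q ** B ** (P ** Q) ** B ** P"
    by (simp add: matrix_mul_assoc)
  also have "\<dots> = Q ** (B ** B ** P)"
    by (simp add: PQ matrix_mul_assoc)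
  finally have "trace ((Q ** B ** P) ** (Q ** B ** P)) = trace ((B ** B ** P) ** Q)"
    using trace_mul_sym[of Q "B ** B ** P"] by simp
  then show ?thesis
    by (simp add: PQ flip: matrix_mul_assoc)
qed

lemma norm_sq_le_of_bounded_sec_curv:
  fixes B Q :: "real^'n::finite^'n" and K :: real
  assumes "admissible_frame F" and "bounded_sec_curv B F K" and QP: "Q ** frame_xblock F = mat 1"
  shows "(norm (Q ** B ** frame_xblock F))\<^sup>2 \<le> 2 * CARD('n) * K - trace (B ** B)"
proof -
  define C where "C = Q ** B ** frame_xblock F"
  have fb: "frame_bracket B F = frame_bracket C (mat 1)"
    unfolding C_def by (rule frame_bracket_admissible[OF assms(1) QP])
  have "\<bar>sec_curv C (mat 1) (axis None 1) (axis (Some j) 1)\<bar> \<le> K" for j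
    using assms(2) by (simp add: bounded_sec_curv_def sec_curv_cong[OF fb, symmetric])
  moreover have "trace (C ** C) = trace (B ** B)"
    unfolding C_def by (rule trace_square_conj[OF QP])
  ultimately show ?thesis
    using norm_sq_le_of_sec_curv_bounded[of C K] unfolding C_def by simp
qed

section \<open>The invariant Laplacian on 1-forms\<close>

lemma two_form_inner_d_form_mat_1:
  fixes C :: "real^'n::finite^'n"
  shows "two_form_inner (d_form C (mat 1) \<alpha>) (d_form C (mat 1) \<beta>)
           = (transpose C *v xpart \<alpha>) \<bullet> (transpose C *v xpart \<beta>)"
  unfolding two_form_inner_def d_form_def
  by (simp add: sum_UNIV_option inner_matrix_vector_axis inner_minus_right)
     (simp add: inner_vec_def)

lemma inner_transpose_transpose:
  "(transpose C *v x) \<bullet> (transpose C *v y) = ((C ** transpose C) *v x) \<bullet> y"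
  for C :: "real^'n::finite^'m::finite"
  by (metis inner_commute inner_transpose_matrix_vector matrix_vector_mul_assoc)

lemma inv_laplace_eigenvalue_mat_1_iff:
  fixes C :: "real^'n::finite^'n"
  assumes "lam > 0"
  shows "inv_laplace_eigenvalue C (mat 1) lam
           \<longleftrightarrow> (\<exists>x. x \<noteq> 0 \<and> (C ** transpose C) *v x = lam *\<^sub>R x)"
proof
  assume "inv_laplace_eigenvalue C (mat 1) lam"
  then obtain \<alpha> where "\<alpha> \<noteq> 0" and
    eig: "\<And>\<beta>. ((C ** transpose C) *v xpart \<alpha>) \<bullet> xpart \<beta> = lam * (\<alpha> \<bullet> \<beta>)"
    by (auto simp: inv_laplace_eigenvalue_def two_form_inner_d_form_mat_1 inner_transpose_transpose)
  have "\<alpha> $ None = 0"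
    using eig[of "axis None 1"] assms by simp
  have "xpart \<alpha> \<noteq> 0"
  proof
    assume "xpart \<alpha> = 0"
    then have "\<alpha> $ a = 0" for a
      using \<open>\<alpha> $ None = 0\<close> by (cases a) (auto simp: vec_eq_iff)
    with \<open>\<alpha> \<noteq> 0\<close> show False
      by (simp add: vec_eq_iff)
  qed
  have "((C ** transpose C) *v xpart \<alpha> - lam *\<^sub>R xpart \<alpha>) \<bullet> y = 0" for y
    using eig[of "xembed y"] by (simp add: inner_diff_left inner_diff_right inner_commute)
  then have "(C ** transpose C) *v xpart \<alpha> = lam *\<^sub>R xpart \<alpha>"
    by (metis eq_iff_diff_eq_0 inner_eq_zero_iff)
  with \<open>xpart \<alpha> \<noteq> 0\<close> show "\<exists>x. x \<noteq> 0 \<and> (C ** transpose C) *v x = lam *\<^sub>R x"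
    by blast
next
  assume "\<exists>x. x \<noteq> 0 \<and> (C ** transpose C) *v x = lam *\<^sub>R x"
  then obtain x where "x \<noteq> 0" and x: "(C ** transpose C) *v x = lam *\<^sub>R x"
    by blast
  then have "xembed x \<noteq> 0"
    by (metis xpart_xembed xpart_simps(4))
  moreover have "((C ** transpose C) *v xpart (xembed x)) \<bullet> xpart \<beta> = lam * (xembed x \<bullet> \<beta>)" for \<beta>
    by (simp add: x)
  ultimately show "inv_laplace_eigenvalue C (mat 1) lam"
    unfolding inv_laplace_eigenvalue_def two_form_inner_d_form_mat_1 inner_transpose_transpose
    by blast
qed

lemma inv_laplace_eigenvalue_of_eigenvector:
  assumes "frame_bracket B F = frame_bracket C (mat 1)"
    and "x \<noteq> 0" and "(C ** transpose C) *v x = lam *\<^sub>R x" and "lam > 0"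
  shows "inv_laplace_eigenvalue B F lam"
  using inv_laplace_eigenvalue_mat_1_iff[OF assms(4)] assms(2,3)
  by (auto simp: inv_laplace_eigenvalue_cong[OF assms(1)])

lemma lambda_inv_11_le:
  assumes "inv_laplace_eigenvalue B F lam" and "lam > 0"
  shows "lambda_inv_11 B F \<le> lam"
  unfolding lambda_inv_11_def
  by (rule cInf_lower) (use assms in \<open>auto intro: bdd_belowI[of _ 0]\<close>)

lemma lambda_inv_11_ge:
  assumes "\<exists>lam>0. inv_laplace_eigenvalue B F lam"
    and "\<And>lam. lam > 0 \<Longrightarrow> inv_laplace_eigenvalue B F lam \<Longrightarrow> c \<le> lam"
  shows "c \<le> lambda_inv_11 B F"
  unfolding lambda_inv_11_def
  by (rule cInf_greatest) (use assms in auto)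

lemma lambda_inv_11_tendsto_zero:
  assumes "\<And>k. inv_laplace_eigenvalue B (F k) (e k)" and "\<And>k. e k > 0" and "e \<longlonglongrightarrow> 0"
  shows "(\<lambda>k. lambda_inv_11 B (F k)) \<longlonglongrightarrow> 0"
proof (rule tendsto_sandwich[OF always_eventually always_eventually tendsto_const assms(3)])
  show "\<forall>k. 0 \<le> lambda_inv_11 B (F k)"
    using assms(1,2) by (auto intro!: lambda_inv_11_ge)
  show "\<forall>k. lambda_inv_11 B (F k) \<le> e k"
    using assms(1,2) by (auto intro: lambda_inv_11_le)
qed

section \<open>Matrices with ker B^2 = ker B\<close>

lemma matrix_add_rdistrib: "(A + B) ** C = A ** C + B ** C"
  for A B :: "real^'n::finite^'m"
  by (simp add: vec_eq_iff matrix_matrix_mult_def sum.distrib distrib_right)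

lemma matpow_commute: "matpow B k ** B = B ** matpow B k"
  by (induction k) (simp_all flip: matrix_mul_assoc)

lemma matpow_conj:
  fixes B P Q :: "real^'n::finite^'n"
  assumes "Q ** P = mat 1"
  shows "matpow (Q ** B ** P) k = Q ** matpow B k ** P"
proof (induction k)
  case 0
  then show ?case using assms by simp
next
  case (Suc k)
  have "P ** Q = mat 1"
    using assms matrix_left_right_inverse by blast
  then show ?case
    using Suc by (simp add: matrix_mul_assoc) (metis matrix_mul_assoc matrix_mul_rid)
qed

lemma matpow_kernel_imp_kernel:
  assumes "\<And>v. B *v (B *v v) = 0 \<Longrightarrow> B *v v = 0" and "matpow B k *v v = 0"
  shows "B *v v = 0"
  using assms(2)
proof (induction k arbitrary: v)
  case 0
  then show ?case by simp
next
  case (Suc k)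
  have "matpow B k *v (B *v v) = 0"
    using Suc.prems by (simp add: matrix_vector_mul_assoc flip: matpow_commute)
  then show ?case
    using Suc.IH assms(1) by blast
qed

lemma gen_kernel_dim_eq_kernel_dim_iff:
  fixes B :: "real^'n::finite^'n"
  shows "gen_kernel_dim B = kernel_dim B \<longleftrightarrow> (\<forall>v. B *v (B *v v) = 0 \<longrightarrow> B *v v = 0)"
proof -
  define G where "G = {v. \<exists>k. matpow B k *v v = (0::real^'n)}"
  define K where "K = {v. B *v v = (0::real^'n)}"
  have "K \<subseteq> G"
    unfolding K_def G_def by (auto intro: exI[of _ "Suc 0"])
  have "subspace K"
    by (auto simp: subspace_def K_def matrix_vector_right_distrib matrix_vector_mult_scaleR)
  have "gen_kernel_dim B = kernel_dim B \<longleftrightarrow> G \<subseteq> K"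
  proof
    assume "gen_kernel_dim B = kernel_dim B"
    then have "span K = span G"
      using dim_eq_span[OF \<open>K \<subseteq> G\<close>] by (simp add: gen_kernel_dim_def kernel_dim_def G_def K_def)
    then show "G \<subseteq> K"
      using \<open>subspace K\<close> span_superset[of G] by (metis span_eq_iff)
  next
    assume "G \<subseteq> K"
    then show "gen_kernel_dim B = kernel_dim B"
      using \<open>K \<subseteq> G\<close> by (simp add: gen_kernel_dim_def kernel_dim_def G_def K_def subset_antisym)
  qed
  also have "\<dots> \<longleftrightarrow> (\<forall>v. B *v (B *v v) = 0 \<longrightarrow> B *v v = 0)"
  proof
    assume "G \<subseteq> K"
    moreover have "B *v (B *v v) = 0 \<Longrightarrow> v \<in> G" for v
      unfolding G_def by (auto intro: exI[of _ 2] simp: numeral_2_eq_2 matrix_vector_mul_assoc)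
    ultimately show "\<forall>v. B *v (B *v v) = 0 \<longrightarrow> B *v v = 0"
      by (auto simp: K_def)
  qed (auto simp: G_def K_def intro: matpow_kernel_imp_kernel)
  finally show ?thesis .
qed

lemma linear_inj_on_subspace_image_eq:
  fixes f :: "'a::euclidean_space \<Rightarrow> 'a"
  assumes "linear f" and "subspace V" and "f ` V \<subseteq> V" and "inj_on f V"
  shows "f ` V = V"
proof (rule subspace_dim_equal)
  show "subspace (f ` V)"
    using assms(1,2) by (rule linear_subspace_image)
  have "span V = V"
    using assms(2) by simp
  have "dim (f ` V) = dim V"
    by (rule dim_image_eq[OF assms(1)]) (simp add: \<open>span V = V\<close> assms(4))
  then show "dim V \<le> dim (f ` V)"
    by simp
qed (use assms in auto)

lemma span_matpow_commute:
  assumes "Y \<in> span (range (matpow B))"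
  shows "B ** Y = Y ** B"
  using assms
proof (induction rule: span_induct_alt)
  case base
  then show ?case by simp
next
  case (step c x y)
  then show ?case
    by (auto simp: matrix_add_ldistrib matrix_add_rdistrib matrix_scalar_ac matpow_commute
        simp flip: scalar_matrix_assoc)
qed

lemma inj_on_mult_left_range:
  fixes B :: "real^'n::finite^'n"
  assumes "\<And>v. B *v (B *v v) = 0 \<Longrightarrow> B *v v = 0"
  shows "inj_on (\<lambda>Z. B ** Z) (range (\<lambda>Z. B ** Z))"
proof (rule inj_onI)
  fix X Y assume "X \<in> range (\<lambda>Z. B ** Z)" "Y \<in> range (\<lambda>Z. B ** Z)" and "B ** X = B ** Y"
  then obtain Z1 Z2 where X: "X = B ** Z1" and Y: "Y = B ** Z2" and "B ** B ** Z1 = B ** B ** Z2"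
    by (auto simp: matrix_mul_assoc)
  have "X *v v = Y *v v" for v
  proof -
    have "B *v (B *v (Z1 *v v - Z2 *v v)) = 0"
      using \<open>B ** B ** Z1 = B ** B ** Z2\<close>
      by (simp add: matrix_vector_mult_diff_distrib matrix_vector_mul_assoc matrix_mul_assoc)
    then have "B *v (Z1 *v v - Z2 *v v) = 0"
      by (rule assms)
    then show ?thesis
      by (simp add: X Y matrix_vector_mult_diff_distrib matrix_vector_mul_assoc)
  qed
  then show "X = Y"
    by (simp add: matrix_eq)
qed

(* Left multiplication by B is injective on B W, W the polynomials in B, because
   ker B^2 = ker B; hence it maps B W onto itself, and B = B (B Y) for some Y in W. *)
lemma ex_poly_generalized_inverse:
  fixes B :: "real^'n::finite^'n"
  assumes "\<And>v. B *v (B *v v) = 0 \<Longrightarrow> B *v v = 0"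
  obtains Y where "Y \<in> span (range (matpow B))" and "B ** Y ** B = B"
proof -
  define W where "W = span (range (matpow B))"
  define V where "V = (\<lambda>Z. B ** Z) ` W"
  have lin: "linear (\<lambda>Z::real^'n^'n. B ** Z)"
    by (rule linearI) (simp_all add: matrix_add_ldistrib matrix_scalar_ac flip: scalar_matrix_assoc)
  have "subspace V"
    unfolding V_def W_def by (rule linear_subspace_image[OF lin subspace_span])
  have "(\<lambda>Z. B ** Z) ` range (matpow B) \<subseteq> range (matpow B)"
    by (auto intro: range_eqI[of _ _ "Suc _"])
  then have "(\<lambda>Z. B ** Z) ` W \<subseteq> W"
    unfolding W_def linear_span_image[OF lin, symmetric] by (rule span_mono[THEN order_trans]) simp
  then have "(\<lambda>Z. B ** Z) ` V \<subseteq> V"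
    unfolding V_def by auto
  moreover have "inj_on (\<lambda>Z. B ** Z) V"
    using inj_on_mult_left_range[OF assms] unfolding V_def by (rule inj_on_subset) auto
  ultimately have "(\<lambda>Z. B ** Z) ` V = V"
    by (rule linear_inj_on_subspace_image_eq[OF lin \<open>subspace V\<close>])
  moreover have "B \<in> V"
    unfolding V_def W_def
    by (rule image_eqI[of _ _ "mat 1"], simp, rule span_base) (metis matpow.simps(1) rangeI)
  ultimately obtain Y where "Y \<in> W" and "B = B ** (B ** Y)"
    unfolding V_def by auto
  moreover have "B ** Y = Y ** B"
    using \<open>Y \<in> W\<close> span_matpow_commute unfolding W_def by blast
  ultimately show ?thesis
    using that unfolding W_def by (metis matrix_mul_assoc)
qed

lemma scaleR_matrix_vector_assoc: "(c *\<^sub>R A) *v v = c *\<^sub>R (A *v v)"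
  for A :: "real^'n::finite^'m"
  by (simp add: vec_eq_iff matrix_vector_mult_def sum_distrib_left mult_ac)

lemma norm_matpow_vector_le: "norm (matpow C k *v v) \<le> (norm C) ^ k * norm v"
  for C :: "real^'n::finite^'n"
proof (induction k)
  case 0
  then show ?case by simp
next
  case (Suc k)
  have "norm (matpow C (Suc k) *v v) \<le> norm C * norm (matpow C k *v v)"
    by (simp add: norm_matrix_vector_le flip: matrix_vector_mul_assoc)
  also have "\<dots> \<le> norm C * ((norm C) ^ k * norm v)"
    using Suc by (simp add: mult_left_mono)
  finally show ?case by simp
qed

lemma conj_span_matpow_bounded:
  fixes B Y :: "real^'n::finite^'n"
  assumes "Y \<in> span (range (matpow B))"
  obtains M where "\<And>P Q :: real^'n^'n. \<And>v. Q ** P = mat 1 \<Longrightarrow> norm (Q ** B ** P) \<le> R \<Longrightarrow>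
                     norm ((Q ** Y ** P) *v v) \<le> M * norm v"
proof -
  have "\<exists>M. \<forall>P Q :: real^'n^'n. \<forall>v. Q ** P = mat 1 \<longrightarrow> norm (Q ** B ** P) \<le> R \<longrightarrow>
                     norm ((Q ** Y ** P) *v v) \<le> M * norm v"
    using assms
  proof (induction rule: span_induct_alt)
    case base
    then show ?case by (auto intro: exI[of _ 0])
  next
    case (step c x y)
    obtain k where k: "x = matpow B k"
      using step(1) by blast
    obtain M where M: "\<forall>P Q :: real^'n^'n. \<forall>v. Q ** P = mat 1 \<longrightarrow> norm (Q ** B ** P) \<le> R \<longrightarrow>
                     norm ((Q ** y ** P) *v v) \<le> M * norm v"
      using step(2) by blast
    have "norm ((Q ** (c *\<^sub>R x + y) ** P) *v v) \<le> (\<bar>c\<bar> * R ^ k + M) * norm v"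
      if QP: "Q ** P = mat 1" and R: "norm (Q ** B ** P) \<le> R" for P Q :: "real^'n^'n" and v
    proof -
      have "Q ** (c *\<^sub>R x + y) ** P = c *\<^sub>R matpow (Q ** B ** P) k + Q ** y ** P"
        by (simp add: k matpow_conj[OF QP] matrix_add_ldistrib matrix_add_rdistrib
            matrix_scalar_ac flip: scalar_matrix_assoc)
      then have "(Q ** (c *\<^sub>R x + y) ** P) *v v
                   = c *\<^sub>R (matpow (Q ** B ** P) k *v v) + (Q ** y ** P) *v v"
        by (simp add: matrix_vector_mult_add_rdistrib scaleR_matrix_vector_assoc)
      then have "norm ((Q ** (c *\<^sub>R x + y) ** P) *v v)
                   \<le> \<bar>c\<bar> * norm (matpow (Q ** B ** P) k *v v) + norm ((Q ** y ** P) *v v)"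
        by (metis norm_scaleR norm_triangle_ineq)
      also have "\<dots> \<le> \<bar>c\<bar> * (R ^ k * norm v) + M * norm v"
      proof (intro add_mono mult_left_mono)
        show "norm (matpow (Q ** B ** P) k *v v) \<le> R ^ k * norm v"
          using norm_matpow_vector_le[of "Q ** B ** P" k v] R
          by (meson mult_right_mono norm_ge_zero order_trans power_mono)
      qed (use M QP R in auto)
      finally show ?thesis
        by (simp add: algebra_simps)
    qed
    then show ?case by blast
  qed
  then show ?thesis
    using that by blast
qed

lemma eigenvalue_ge_of_generalized_inverse:
  fixes C Y :: "real^'n::finite^'n"
  assumes CYC: "C ** Y ** C = C" and Y: "\<And>v. norm (Y *v v) \<le> M * norm v"
    and "x \<noteq> 0" and x: "(C ** transpose C) *v x = lam *\<^sub>R x" and "lam > 0"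
  shows "1 \<le> M\<^sup>2 * lam"
proof -
  define w where "w = transpose C *v x"
  have "x = C *v ((1 / lam) *\<^sub>R w)"
    using x \<open>lam > 0\<close> by (simp add: w_def matrix_vector_mult_scaleR matrix_vector_mul_assoc)
  then have "C *v (Y *v x) = x"
    by (metis CYC matrix_vector_mul_assoc)
  then have "(norm x)\<^sup>2 = w \<bullet> (Y *v x)"
    by (simp add: w_def power2_norm_eq_inner inner_transpose_matrix_vector)
  also have "\<dots> \<le> norm w * (M * norm x)"
    using norm_cauchy_schwarz[of w "Y *v x"] Y[of x] by (meson mult_left_mono norm_ge_zero order_trans)
  finally have "norm x * norm x \<le> (M * norm w) * norm x"
    by (simp add: power2_eq_square mult_ac)
  then have "norm x \<le> M * norm w"
    using \<open>x \<noteq> 0\<close> by (simp add: mult_right_le_imp_le)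
  then have "(norm x)\<^sup>2 \<le> M\<^sup>2 * (norm w)\<^sup>2"
    by (metis norm_ge_zero power_mono power_mult_distrib)
  also have "(norm w)\<^sup>2 = lam * (norm x)\<^sup>2"
    using x by (simp add: w_def power2_norm_eq_inner inner_transpose_transpose)
  finally have "1 * (norm x)\<^sup>2 \<le> (M\<^sup>2 * lam) * (norm x)\<^sup>2"
    by (simp add: mult_ac)
  then show ?thesis
    using \<open>x \<noteq> 0\<close> by (simp add: mult_right_le_imp_le)
qed

lemma eigenvalue_ge_of_conj_generalized_inverse:
  fixes B Y P Q :: "real^'n::finite^'n"
  assumes BYB: "B ** Y ** B = B" and QP: "Q ** P = mat 1"
    and M: "\<And>v. norm ((Q ** Y ** P) *v v) \<le> M * norm v"
    and fb: "frame_bracket B F = frame_bracket (Q ** B ** P) (mat 1)"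
    and "inv_laplace_eigenvalue B F lam" and "lam > 0"
  shows "1 \<le> M\<^sup>2 * lam"
proof -
  define C where "C = Q ** B ** P"
  have "P ** Q = mat 1"
    using QP matrix_left_right_inverse by blast
  have "C ** (Q ** Y ** P) ** C = Q ** (B ** (P ** Q) ** Y ** (P ** Q) ** B) ** P"
    by (simp add: C_def matrix_mul_assoc)
  then have "C ** (Q ** Y ** P) ** C = C"
    by (simp add: \<open>P ** Q = mat 1\<close> BYB C_def)
  moreover obtain x where "x \<noteq> 0" "(C ** transpose C) *v x = lam *\<^sub>R x"
    using assms(5) inv_laplace_eigenvalue_mat_1_iff[OF \<open>lam > 0\<close>]
    by (auto simp: C_def inv_laplace_eigenvalue_cong[OF fb])
  ultimately show ?thesis
    using eigenvalue_ge_of_generalized_inverse M \<open>lam > 0\<close> by blast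
qed

lemma spectral_gap_of_bounded_sec_curv:
  fixes B :: "real^'n::finite^'n"
  assumes "gen_kernel_dim B = kernel_dim B"
  obtains c where "c > 0"
    and "\<And>F lam. admissible_frame F \<Longrightarrow> bounded_sec_curv B F K \<Longrightarrow>
                  lam > 0 \<Longrightarrow> inv_laplace_eigenvalue B F lam \<Longrightarrow> c \<le> lam"
proof -
  have "\<And>v. B *v (B *v v) = 0 \<Longrightarrow> B *v v = 0"
    using assms gen_kernel_dim_eq_kernel_dim_iff by blast
  then obtain Y where Y: "Y \<in> span (range (matpow B))" "B ** Y ** B = B"
    by (rule ex_poly_generalized_inverse)
  define R where "R = sqrt \<bar>2 * CARD('n) * K - trace (B ** B)\<bar>"
  obtain M where M: "\<And>P Q :: real^'n^'n. \<And>v. Q ** P = mat 1 \<Longrightarrow> norm (Q ** B ** P) \<le> R \<Longrightarrow>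
                       norm ((Q ** Y ** P) *v v) \<le> M * norm v"
    using conj_span_matpow_bounded[OF Y(1)] by blast
  define c where "c = 1 / (M\<^sup>2 + 1)"
  have "0 < M\<^sup>2 + 1"
    by (simp add: add_nonneg_pos)
  have "c \<le> lam"
    if F: "admissible_frame F" "bounded_sec_curv B F K"
      and lam: "lam > 0" "inv_laplace_eigenvalue B F lam" for F lam
  proof -
    define P where "P = frame_xblock F"
    obtain Q where QP: "Q ** P = mat 1"
      using invertible_frame_xblock[OF F(1)] unfolding P_def invertible_def by blast
    have "(norm (Q ** B ** P))\<^sup>2 \<le> \<bar>2 * CARD('n) * K - trace (B ** B)\<bar>"
      using norm_sq_le_of_bounded_sec_curv[OF F QP[unfolded P_def]] unfolding P_def
      by (meson abs_ge_self order_trans)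
    then have "norm (Q ** B ** P) \<le> R"
      unfolding R_def by (rule real_le_rsqrt)
    then have "1 \<le> M\<^sup>2 * lam"
      using eigenvalue_ge_of_conj_generalized_inverse[OF Y(2) QP M[OF QP]]
        frame_bracket_admissible[OF F(1) QP[unfolded P_def]] lam
      unfolding P_def by blast
    then have "1 \<le> lam * (M\<^sup>2 + 1)"
      using lam(1) by (simp add: distrib_left mult.commute)
    then show "c \<le> lam"
      unfolding c_def by (simp add: pos_divide_le_eq[OF \<open>0 < M\<^sup>2 + 1\<close>])
  qed
  moreover have "c > 0"
    using \<open>0 < M\<^sup>2 + 1\<close> by (simp add: c_def)
  ultimately show ?thesis
    using that by blast
qed

lemma kernel_dims_differ_of_lambda_inv_11_tendsto_zero:
  fixes B :: "real^'n::finite^'n" and F :: "nat \<Rightarrow> real^('n option)^('n option)"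
  assumes adm: "\<And>k. admissible_frame (F k)" and curv: "\<And>k. bounded_sec_curv B (F k) K"
    and eig: "\<And>k. \<exists>lam>0. inv_laplace_eigenvalue B (F k) lam"
    and lim: "(\<lambda>k. lambda_inv_11 B (F k)) \<longlonglongrightarrow> 0"
  shows "gen_kernel_dim B \<noteq> kernel_dim B"
proof
  assume "gen_kernel_dim B = kernel_dim B"
  then obtain c where "c > 0" and gap: "\<And>F lam. admissible_frame F \<Longrightarrow> bounded_sec_curv B F K \<Longrightarrow>
                                          lam > 0 \<Longrightarrow> inv_laplace_eigenvalue B F lam \<Longrightarrow> c \<le> lam"
    using spectral_gap_of_bounded_sec_curv[where K = K] by metis
  have "c \<le> lambda_inv_11 B (F k)" for k
    using eig adm curv gap by (blast intro: lambda_inv_11_ge)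
  moreover obtain k where "lambda_inv_11 B (F k) < c"
    using order_tendstoD(2)[OF lim \<open>c > 0\<close>] unfolding eventually_sequentially by blast
  ultimately show False
    by (meson not_le)
qed

section \<open>Matrices with a nilpotent Jordan block\<close>

lemma ex_nonzero_minor:
  fixes a b :: "real^'n::finite"
  assumes "a \<noteq> 0" and "\<And>c. b \<noteq> c *\<^sub>R a"
  obtains i j where "a $ i * b $ j - a $ j * b $ i \<noteq> 0"
proof (rule ccontr)
  assume "\<not> thesis"
  then have minors: "a $ i * b $ j = a $ j * b $ i" for i j
    using that by fastforce
  obtain i where "a $ i \<noteq> 0"
    using assms(1) by (auto simp: vec_eq_iff)
  then have "b = (b $ i / a $ i) *\<^sub>R a"
    using minors[of i] by (simp add: vec_eq_iff field_simps)
  then show False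
    using assms(2) by blast
qed

lemma left_invertible_replace_two_columns:
  fixes a w :: "real^'n::finite"
  assumes minor: "a $ i * w $ j - a $ j * w $ i \<noteq> 0"
  shows "\<exists>Q. Q ** (\<chi> r s. if s = i then a $ r else if s = j then w $ r else mat 1 $ r $ s) = mat 1"
proof -
  define T :: "real^'n^'n" where
    "T = (\<chi> r s. if s = i then a $ r else if s = j then w $ r else mat 1 $ r $ s)"
  have "i \<noteq> j"
    using minor by auto
  have T_nth: "(T *v c) $ r = a $ r * c $ i + w $ r * c $ j + (if r = i \<or> r = j then 0 else c $ r)"
    for c r
  proof -
    have "(T *v c) $ r = (\<Sum>s\<in>UNIV. (if s = i then a $ r * c $ i else 0)
        + (if s = j then w $ r * c $ j else 0) + (if s = r \<and> r \<noteq> i \<and> r \<noteq> j then c $ r else 0))"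
      unfolding matrix_vector_mult_def T_def mat_def using \<open>i \<noteq> j\<close> by (auto intro!: sum.cong)
    then show ?thesis
      by (simp add: sum.distrib)
  qed
  have "c = 0" if "T *v c = 0" for c
  proof -
    have eqs: "a $ i * c $ i + w $ i * c $ j = 0" "a $ j * c $ i + w $ j * c $ j = 0"
      using T_nth[of c i] T_nth[of c j] that by simp_all
    \<comment> \<open>Cramer's rule for the 2 x 2 system formed by rows i and j\<close>
    have "c $ i * (a $ i * w $ j - a $ j * w $ i)
            = w $ j * (a $ i * c $ i + w $ i * c $ j) - w $ i * (a $ j * c $ i + w $ j * c $ j)"
      and "c $ j * (a $ i * w $ j - a $ j * w $ i)
            = a $ i * (a $ j * c $ i + w $ j * c $ j) - a $ j * (a $ i * c $ i + w $ i * c $ j)"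
      by (simp_all add: algebra_simps)
    then have "c $ i * (a $ i * w $ j - a $ j * w $ i) = 0"
      and "c $ j * (a $ i * w $ j - a $ j * w $ i) = 0"
      using eqs by simp_all
    then have "c $ i = 0" "c $ j = 0"
      using minor by simp_all
    then have "c $ r = 0" for r
      using T_nth[of c r] that by (cases "r = i \<or> r = j") auto
    then show "c = 0"
      by (simp add: vec_eq_iff)
  qed
  then show ?thesis
    using matrix_left_invertible_ker unfolding T_def by blast
qed

lemma ex_conj_shift_columns:
  fixes B :: "real^'n::finite^'n"
  assumes "B *v (B *v w) = 0" and "B *v w \<noteq> 0"
  obtains P Q :: "real^'n^'n" and i j where "i \<noteq> j" and "Q ** P = mat 1"
    and "(Q ** B ** P) *v axis i 1 = 0" and "(Q ** B ** P) *v axis j 1 = axis i 1"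
proof -
  define a where "a = B *v w"
  have "w \<noteq> c *\<^sub>R a" for c
  proof
    assume "w = c *\<^sub>R a"
    then have "B *v w = c *\<^sub>R (B *v a)"
      by (simp add: matrix_vector_mult_scaleR)
    moreover have "B *v a = 0"
      using assms(1) by (simp add: a_def)
    ultimately show False
      using assms(2) by simp
  qed
  then obtain i j where minor: "a $ i * w $ j - a $ j * w $ i \<noteq> 0"
    using ex_nonzero_minor[of a w] assms(2) a_def by blast
  then have "i \<noteq> j" by auto
  define T :: "real^'n^'n" where
    "T = (\<chi> r s. if s = i then a $ r else if s = j then w $ r else mat 1 $ r $ s)"
  obtain Q where QT: "Q ** T = mat 1"
    using left_invertible_replace_two_columns[OF minor] unfolding T_def by blast
  have T_i: "T *v axis i 1 = a" and T_j: "T *v axis j 1 = w"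
    using \<open>i \<noteq> j\<close> by (simp_all add: vec_eq_iff T_def)
  have "Q *v a = axis i 1"
    using QT T_i by (metis matrix_vector_mul_assoc matrix_vector_mul_lid)
  then have "(Q ** B ** T) *v axis i 1 = 0" and "(Q ** B ** T) *v axis j 1 = axis i 1"
    using assms(1) by (simp_all add: T_i T_j a_def flip: matrix_vector_mul_assoc)
  then show ?thesis
    using that \<open>i \<noteq> j\<close> QT by blast
qed

lemma axis_1_nth: "axis i (1::real) $ p = (if p = i then 1 else 0)"
  by (simp add: axis_def)

lemma matrix_mult_row: "(A ** B) $ i = A $ i v* B"
  for A :: "real^'n::finite^'m" and B :: "real^'p^'n"
  by (simp add: vec_eq_iff matrix_matrix_mult_def vector_matrix_mult_def mult.commute)

lemma axis_vector_matrix_mult: "axis i 1 v* M = M $ i"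
  for M :: "real^'n::finite^'m::finite"
  by (simp add: vec_eq_iff transpose_def flip: transpose_matrix_vector)

lemma left_invertible_replace_row:
  fixes r :: "real^'n::finite"
  assumes "r $ j \<noteq> 0"
  shows "\<exists>P. P ** (\<chi> p. if p = j then r else mat 1 $ p) = mat 1"
proof -
  define S :: "real^'n^'n" where "S = (\<chi> p. if p = j then r else mat 1 $ p)"
  have "c = 0" if "S *v c = 0" for c
  proof -
    have "c $ p = 0" if "p \<noteq> j" for p
    proof -
      have "(S *v c) $ p = (mat 1 *v c) $ p"
        using that by (simp only: matrix_vector_mul_component) (simp add: S_def)
      then show ?thesis
        using \<open>S *v c = 0\<close> by simp
    qed
    then have "c = c $ j *\<^sub>R axis j 1"
      by (simp add: vec_eq_iff axis_1_nth)
    moreover have "r \<bullet> c = 0"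
      using \<open>S *v c = 0\<close> matrix_vector_mul_component[of S c j] by (simp add: S_def)
    ultimately show "c = 0"
      using assms by (metis inner_axis_one(1) inner_scaleR_right mult_eq_0_iff scaleR_eq_0_iff)
  qed
  then show ?thesis
    using matrix_left_invertible_ker unfolding S_def by blast
qed

lemma ex_conj_shift_row:
  fixes R :: "real^'n::finite^'n"
  assumes "i \<noteq> j" and R_i: "R *v axis i 1 = 0" and R_j: "R *v axis j 1 = axis i 1"
  obtains P Q :: "real^'n^'n" where "Q ** P = mat 1"
    and "(Q ** R ** P) *v axis i 1 = 0" and "(Q ** R ** P) *v axis j 1 = axis i 1"
    and "(Q ** R ** P) $ i = axis j 1"
proof -
  define r where "r = R $ i"
  have "r $ i = 0" "r $ j = 1"
    using R_i R_j \<open>i \<noteq> j\<close> matrix_vector_axis_nth[of R i i] matrix_vector_axis_nth[of R j i]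
    by (simp_all add: r_def)
  define S :: "real^'n^'n" where "S = (\<chi> p. if p = j then r else mat 1 $ p)"
  obtain P where PS: "P ** S = mat 1"
    using left_invertible_replace_row[of r j] \<open>r $ j = 1\<close> unfolding S_def by auto
  then have SP: "S ** P = mat 1"
    using matrix_left_right_inverse by blast
  have S_i: "S *v axis i 1 = axis i 1" and S_j: "S *v axis j 1 = axis j 1"
    using \<open>r $ i = 0\<close> \<open>r $ j = 1\<close> \<open>i \<noteq> j\<close>
    by (simp_all add: vec_eq_iff S_def mat_def axis_1_nth)
  then have P_i: "P *v axis i 1 = axis i 1" and P_j: "P *v axis j 1 = axis j 1"
    using PS by (metis matrix_vector_mul_assoc matrix_vector_mul_lid)+
  have "S $ i = axis i 1" and "S $ j = r"
    using \<open>i \<noteq> j\<close> by (simp_all add: vec_eq_iff S_def mat_def axis_1_nth)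
  then have "(S ** R ** P) $ i = S $ j v* P"
    by (simp add: matrix_mult_row axis_vector_matrix_mult r_def flip: matrix_mul_assoc)
  also have "\<dots> = (S ** P) $ j"
    by (simp add: matrix_mult_row)
  also have "\<dots> = axis j 1"
    by (auto simp: SP mat_def axis_def vec_eq_iff)
  moreover have "(S ** R ** P) *v x = S *v (R *v (P *v x))" for x
    by (simp add: matrix_vector_mul_assoc matrix_mul_assoc)
  ultimately show ?thesis
    using that[OF SP] R_i R_j P_i P_j S_i by simp
qed

lemma ex_nilpotent_normal_form:
  fixes B :: "real^'n::finite^'n"
  assumes "B *v (B *v w) = 0" and "B *v w \<noteq> 0"
  obtains P Q :: "real^'n^'n" and i j where "i \<noteq> j" and "Q ** P = mat 1"
    and "(Q ** B ** P) *v axis i 1 = 0" and "(Q ** B ** P) *v axis j 1 = axis i 1"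
    and "(Q ** B ** P) $ i = axis j 1"
proof -
  obtain P1 Q1 :: "real^'n^'n" and i j where "i \<noteq> j" and QP1: "Q1 ** P1 = mat 1"
    and col_i: "(Q1 ** B ** P1) *v axis i 1 = 0" and col_j: "(Q1 ** B ** P1) *v axis j 1 = axis i 1"
    by (rule ex_conj_shift_columns[OF assms])
  obtain P2 Q2 :: "real^'n^'n" where QP2: "Q2 ** P2 = mat 1"
    and "(Q2 ** (Q1 ** B ** P1) ** P2) *v axis i 1 = 0"
    and "(Q2 ** (Q1 ** B ** P1) ** P2) *v axis j 1 = axis i 1"
    and "(Q2 ** (Q1 ** B ** P1) ** P2) $ i = axis j 1"
    by (rule ex_conj_shift_row[OF \<open>i \<noteq> j\<close> col_i col_j])
  moreover have "(Q2 ** Q1) ** B ** (P1 ** P2) = Q2 ** (Q1 ** B ** P1) ** P2"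
    by (simp add: matrix_mul_assoc)
  moreover have "(Q2 ** Q1) ** (P1 ** P2) = Q2 ** (Q1 ** P1) ** P2"
    by (simp add: matrix_mul_assoc)
  ultimately show ?thesis
    using that[of i j "Q2 ** Q1" "P1 ** P2"] \<open>i \<noteq> j\<close> QP1 by simp
qed

definition diag_mat :: "('n \<Rightarrow> real) \<Rightarrow> real^'n^'n" where
  "diag_mat d = (\<chi> p q. if p = q then d p else 0)"

lemma diag_mat_conj_nth: "(diag_mat f ** C ** diag_mat g) $ p $ q = f p * C $ p $ q * g q"
  for C :: "real^'n::finite^'n"
proof -
  have if_zero_mult: "(if P then x else 0) * y = (if P then x * y else 0)" for P and x y :: real
    by simp
  have "(diag_mat f ** M) $ p $ q = f p * M $ p $ q" for M :: "real^'n^'n"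
    by (simp add: diag_mat_def matrix_matrix_mult_def if_zero_mult)
  moreover have "(M ** diag_mat g) $ p $ q = M $ p $ q * g q" for M :: "real^'n^'n"
    by (simp add: diag_mat_def matrix_matrix_mult_def if_distrib cong: if_cong)
  ultimately show ?thesis
    by simp
qed

lemma norm_diag_conj_le:
  fixes C :: "real^'n::finite^'n"
  assumes "C *v axis i 1 = 0" and "0 < e" and "e \<le> 1"
  shows "norm (diag_mat (\<lambda>p. if p = i then e else 1) ** C ** diag_mat (\<lambda>p. if p = i then 1 / e else 1))
           \<le> norm C"
proof -
  let ?E = "diag_mat (\<lambda>p. if p = i then e else 1) ** C ** diag_mat (\<lambda>p. if p = i then 1 / e else 1)"
  have "\<bar>?E $ p $ q\<bar> \<le> \<bar>C $ p $ q\<bar>" for p q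
  proof (cases "q = i")
    case True
    then show ?thesis
      using assms(1) matrix_vector_axis_nth[of C i p] by (simp add: diag_mat_conj_nth)
  next
    case False
    then have "\<bar>?E $ p $ q\<bar> = \<bar>if p = i then e else 1\<bar> * \<bar>C $ p $ q\<bar>"
      by (simp add: diag_mat_conj_nth abs_mult)
    also have "\<dots> \<le> 1 * \<bar>C $ p $ q\<bar>"
      using assms(2,3) by (intro mult_right_mono) auto
    finally show ?thesis by simp
  qed
  then show ?thesis
    by (intro norm_le_componentwise_cart) simp
qed

lemma diag_conj_eigenvector:
  fixes C :: "real^'n::finite^'n" and e :: real
  assumes "i \<noteq> j" and col_j: "C *v axis j 1 = axis i 1" and row_i: "C $ i = axis j 1"
  defines "E \<equiv> diag_mat (\<lambda>p. if p = i then e else 1) ** C ** diag_mat (\<lambda>p. if p = i then 1 / e else 1)"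
  shows "(E ** transpose E) *v axis i 1 = e\<^sup>2 *\<^sub>R axis i 1"
proof -
  have E_nth: "E $ p $ q = (if p = i then e else 1) * C $ p $ q * (if q = i then 1 / e else 1)" for p q
    unfolding E_def by (rule diag_mat_conj_nth)
  have "(transpose E *v axis i 1) $ q = (e *\<^sub>R axis j 1) $ q" for q
    unfolding matrix_vector_axis_nth using \<open>i \<noteq> j\<close> row_i
    by (simp add: transpose_def E_nth axis_1_nth)
  then have ET_i: "transpose E *v axis i 1 = e *\<^sub>R axis j 1"
    by (simp add: vec_eq_iff)
  have C_col_j: "C $ p $ j = (if p = i then 1 else 0)" for p
    using col_j matrix_vector_axis_nth[of C j p] by (simp add: axis_1_nth)
  have "(E *v axis j 1) $ p = (e *\<^sub>R axis i 1) $ p" for p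
    unfolding matrix_vector_axis_nth using \<open>i \<noteq> j\<close>
    by (simp add: E_nth C_col_j axis_1_nth)
  then have E_j: "E *v axis j 1 = e *\<^sub>R axis i 1"
    by (simp add: vec_eq_iff)
  have "(E ** transpose E) *v axis i 1 = E *v (e *\<^sub>R axis j 1)"
    by (simp only: ET_i flip: matrix_vector_mul_assoc)
  also have "\<dots> = e\<^sup>2 *\<^sub>R axis i 1"
    by (simp only: matrix_vector_mult_scaleR E_j scaleR_scaleR power2_eq_square)
  finally show ?thesis .
qed

lemma nilpotent_block_frames:
  fixes B :: "real^'n::finite^'n"
  assumes "B *v (B *v w) = 0" and "B *v w \<noteq> 0"
  obtains K where "\<And>e. 0 < e \<Longrightarrow> e \<le> 1 \<Longrightarrow>
    \<exists>F. admissible_frame F \<and> bounded_sec_curv B F K \<and> inv_laplace_eigenvalue B F (e\<^sup>2)"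
proof -
  obtain P Q :: "real^'n^'n" and i j where "i \<noteq> j" and QP: "Q ** P = mat 1"
    and normal: "(Q ** B ** P) *v axis i 1 = 0" "(Q ** B ** P) *v axis j 1 = axis i 1"
      "(Q ** B ** P) $ i = axis j 1"
    by (rule ex_nilpotent_normal_form[OF assms])
  define C where "C = Q ** B ** P"
  have "\<exists>F. admissible_frame F \<and> bounded_sec_curv B F (24 * (norm C)\<^sup>2)
            \<and> inv_laplace_eigenvalue B F (e\<^sup>2)" if "0 < e" "e \<le> 1" for e
  proof -
    define f where "f = (\<lambda>p. if p = i then e else 1)"
    define g where "g = (\<lambda>p. if p = i then 1 / e else 1)"
    define Pe where "Pe = P ** diag_mat g"
    define Qe where "Qe = diag_mat f ** Q"
    have "Qe ** Pe = diag_mat f ** (Q ** P) ** diag_mat g"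
      by (simp add: Pe_def Qe_def matrix_mul_assoc)
    also have "\<dots> = mat 1"
      using \<open>0 < e\<close> by (simp add: QP vec_eq_iff diag_mat_conj_nth mat_def f_def g_def)
    finally have QPe: "Qe ** Pe = mat 1" .
    have "Qe ** B ** Pe = diag_mat f ** C ** diag_mat g"
      by (simp add: C_def Pe_def Qe_def matrix_mul_assoc)
    then have norm_le: "norm (Qe ** B ** Pe) \<le> norm C"
      and eig: "((Qe ** B ** Pe) ** transpose (Qe ** B ** Pe)) *v axis i 1 = e\<^sup>2 *\<^sub>R axis i 1"
      using norm_diag_conj_le[OF normal(1)[folded C_def] that]
        diag_conj_eigenvector[OF \<open>i \<noteq> j\<close> normal(2,3)[folded C_def], of e]
      unfolding f_def g_def by simp_all
    have fb: "frame_bracket B (block_frame Pe) = frame_bracket (Qe ** B ** Pe) (mat 1)"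
      by (rule frame_bracket_block_frame[OF QPe])
    have "bounded_sec_curv B (block_frame Pe) (24 * (norm C)\<^sup>2)"
      by (rule bounded_sec_curv_of_norm_le[OF fb norm_le])
    moreover have "inv_laplace_eigenvalue B (block_frame Pe) (e\<^sup>2)"
      by (rule inv_laplace_eigenvalue_of_eigenvector[OF fb _ eig]) (use \<open>0 < e\<close> in auto)
    ultimately show ?thesis
      using admissible_block_frame[OF QPe] by blast
  qed
  then show ?thesis
    using that by blast
qed

lemma ex_frames_lambda_inv_11_tendsto_zero:
  fixes B :: "real^'n::finite^'n"
  assumes "gen_kernel_dim B \<noteq> kernel_dim B"
  obtains F :: "nat \<Rightarrow> real^('n option)^('n option)" and K
  where "\<And>k. admissible_frame (F k)" and "\<And>k. bounded_sec_curv B (F k) K"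
    and "\<And>k. \<exists>lam>0. inv_laplace_eigenvalue B (F k) lam"
    and "(\<lambda>k. lambda_inv_11 B (F k)) \<longlonglongrightarrow> 0"
proof -
  obtain w where w: "B *v (B *v w) = 0" "B *v w \<noteq> 0"
    using assms gen_kernel_dim_eq_kernel_dim_iff by blast
  obtain K where frames: "\<And>e. 0 < e \<Longrightarrow> e \<le> 1 \<Longrightarrow>
      \<exists>F. admissible_frame F \<and> bounded_sec_curv B F K \<and> inv_laplace_eigenvalue B F (e\<^sup>2)"
    using nilpotent_block_frames[OF w] by metis
  define e where "e k = inverse (real (Suc k))" for k
  have "\<exists>F. admissible_frame F \<and> bounded_sec_curv B F K \<and> inv_laplace_eigenvalue B F ((e k)\<^sup>2)"
    for k by (rule frames) (simp_all add: e_def inverse_le_1_iff)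
  then obtain F where F: "\<And>k. admissible_frame (F k) \<and> bounded_sec_curv B (F k) K
                                \<and> inv_laplace_eigenvalue B (F k) ((e k)\<^sup>2)"
    by metis
  have pos: "(e k)\<^sup>2 > 0" for k
    by (simp add: e_def)
  have "(\<lambda>k. (e k)\<^sup>2) \<longlonglongrightarrow> 0"
    using tendsto_power[OF LIMSEQ_inverse_real_of_nat, of 2] by (simp add: e_def)
  then have "(\<lambda>k. lambda_inv_11 B (F k)) \<longlonglongrightarrow> 0"
    using lambda_inv_11_tendsto_zero[of B F "\<lambda>k. (e k)\<^sup>2"] F pos by blast
  then show ?thesis
    using that F pos by blast
qed

theorem mainTheorem3:
  fixes A :: "int^'n::finite^'n" and B :: "real^'n^'n"
  assumes "CARD('n) \<ge> 2"
    and "det A = 1"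
    and "mat_exp B = (\<chi> i j. real_of_int (A $ i $ j))"
  shows "(\<exists>F :: nat \<Rightarrow> real^('n option)^('n option).
            (\<forall>k. admissible_frame (F k))
          \<and> (\<exists>C. \<forall>k u v. ((u \<bullet> u) * (v \<bullet> v) - (u \<bullet> v)^2 \<noteq> 0)
                 \<longrightarrow> \<bar>sec_curv B (F k) u v\<bar> \<le> C)
          \<and> (\<forall>k. \<exists>lam>0. inv_laplace_eigenvalue B (F k) lam)
          \<and> (\<lambda>k. lambda_inv_11 B (F k)) \<longlonglongrightarrow> 0)
     \<longleftrightarrow> gen_kernel_dim B \<noteq> kernel_dim B"
  unfolding bounded_sec_curv_def[symmetric]
  using kernel_dims_differ_of_lambda_inv_11_tendsto_zero ex_frames_lambda_inv_11_tendsto_zero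
  by metis

end
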